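(* Let $S\ge 2$ and $H\ge S$. Suppose all sending sub-networks use the same family of likelihoods $L(\theta)$, $\theta=1,\ldots,H$, where $L(\theta)$ is the unit-variance Gaussian density with mean $\mathsf{m}_\theta$ and the means $\mathsf{m}_1,\ldots,\mathsf{m}_H$ are distinct; and suppose the true distribution $f^{(s)}$ of sending sub-network $s$ ($s=1,\ldots,S$) is the unit-variance Gaussian with mean $\nu_s\in\{\mathsf{m}_1,\ldots,\mathsf{m}_H\}$, where $\nu_1,\ldots,\nu_S$ are distinct. Let $D=[d_{\theta s}]\in\mathbb{R}^{H\times S}$ with $d_{\theta s}=D[f^{(s)}\|L(\theta)]=\tfrac12(\mathsf{m}_\theta-\nu_s)^2$. Let $k$ be a receiving agent with aggregate weight vector $x_k=[x_{1k},\ldots,x_{Sk}]^\top$, and assume that $\theta\mapsto\sum_{s=1}^S d_{\theta s}x_{sk}$ has a unique minimizer $\theta^\star_k$ over $\{1,\ldots,H\}$. Define $B_k=(\mathbb{1}_He_{\theta^\star_k}^\top-I_H)D$ and $C_k=\begin{bmatrix}B_k\\ \mathbb{1}_S^\top\end{bmatrix}$. Then $\mathrm{rank}(C_k)=2$.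
   Context: Setting: a weakly-connected network in which the agents are partitioned into sending sub-networks $\mathcal{N}_1,\ldots,\mathcal{N}_S$ and receiving sub-networks; the (left-stochastic, nonnegative) combination matrix $A$ has block form $\begin{bmatrix}A_{\mathcal{S}}&A_{\mathcal{S}\mathcal{R}}\\0&A_{\mathcal{R}}\end{bmatrix}$ with $A_{\mathcal{S}}=\mathrm{blockdiag}\{A_{\mathcal{N}_1},\ldots,A_{\mathcal{N}_S}\}$, each sending sub-network strongly connected with Perron vector $p^{(s)}$, each receiving sub-network connected and linked to at least one agent of each sending sub-network. With $E=\mathrm{blockdiag}\{p^{(s)}\mathbb{1}^\top_{N_s}\}$ and $\Omega=[\omega_{\ell k}]=EA_{\mathcal{S}\mathcal{R}}(I-A_{\mathcal{R}})^{-1}$ (the top-right block of $\lim_i A^i$), the aggregate weight from sending sub-network $s$ to receiving agent $k$ is $x_{sk}=\sum_{\ell\in\mathcal{N}_s}\omega_{\ell k}$; these are strictly positive and $\sum_s x_{sk}=1$. Within each sending sub-network all agents share the same true distribution $f^{(s)}$ and likelihoods. $D[f\|g]$ denotes KL divergence, $e_m$ the $m$-th canonical basis vector of $\mathbb{R}^H$, $\mathbb{1}_L$ the all-ones vector. *)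

theory Defs
  imports "Jordan_Normal_Form.DL_Rank"
begin

text \<open>Indices are 0-based: hypotheses theta range over {0..<H}, sending
  sub-networks s over {0..<S}.\<close>

text \<open>KL-divergence matrix D, d_{theta s} = D[f^(s) || L(theta)] = (m_theta - nu_s)^2 / 2
  for unit-variance Gaussians.\<close>
definition KL_mat :: "nat \<Rightarrow> nat \<Rightarrow> (nat \<Rightarrow> real) \<Rightarrow> (nat \<Rightarrow> real) \<Rightarrow> real mat" where
  "KL_mat H S m \<nu> = mat H S (\<lambda>(\<theta>, s). (m \<theta> - \<nu> s)\<^sup>2 / 2)"

definition B_mat :: "nat \<Rightarrow> nat \<Rightarrow> real mat \<Rightarrow> real mat" where
  "B_mat H \<theta>s D = (mat H H (\<lambda>(i, j). if j = \<theta>s then 1 else 0) - 1\<^sub>m H) * D"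

definition C_mat :: "nat \<Rightarrow> nat \<Rightarrow> nat \<Rightarrow> real mat \<Rightarrow> real mat" where
  "C_mat H S \<theta>s D = B_mat H \<theta>s D @\<^sub>r mat 1 S (\<lambda>_. 1)"

end

theory Submission
  imports Defs
begin

(*
  Row \<theta> of B_k is d(\<theta>s, s) - d(\<theta>, s) = (m_\<theta>s^2 - m_\<theta>^2)/2 + (m_\<theta> - m_\<theta>s) \<nu>_s,
  which is affine in \<nu>_s. Hence C_k = f 1^T + h \<nu>^T is a sum of two rank-one matrices and
  rank C_k \<le> 2. Conversely, the 2-by-2 minor of C_k on a row \<theta> \<noteq> \<theta>s, the all-ones row and
  the columns of two sending sub-networks equals (m_\<theta> - m_\<theta>s) (\<nu>_1 - \<nu>_2) \<noteq> 0.
*)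

lemma (in vec_space) rank_le_2_sum_product_entries:
  fixes f g h k :: "nat \<Rightarrow> 'a"
  assumes A: "A \<in> carrier_mat n nc"
    and entries: "\<And>r c. r < n \<Longrightarrow> c < nc \<Longrightarrow> A $$ (r, c) = f r * g c + h r * k c"
  shows "rank A \<le> 2"
proof -
  define P where "P = mat n nc (\<lambda>(r, c). f r * g c)"
  define Q where "Q = mat n nc (\<lambda>(r, c). h r * k c)"
  have P: "P \<in> carrier_mat n nc" and Q: "Q \<in> carrier_mat n nc"
    unfolding P_def Q_def by auto
  have "A = P + Q"
    by (rule eq_matI) (use A entries in \<open>auto simp: P_def Q_def\<close>)
  moreover have "rank P \<le> 1"
    by (rule rank_le_1_product_entries[OF P, of f g]) (auto simp: P_def)
  moreover have "rank Q \<le> 1"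
    by (rule rank_le_1_product_entries[OF Q, of h k]) (auto simp: Q_def)
  ultimately show ?thesis
    using rank_subadditive[OF P Q] by simp
qed

lemma (in vec_space) rank_ge_2_of_nonzero_minor:
  assumes A: "A \<in> carrier_mat n nc"
    and rows: "i0 < n" "i1 < n" and cols: "j0 < nc" "j1 < nc"
    and minor: "A $$ (i0, j0) * A $$ (i1, j1) \<noteq> A $$ (i0, j1) * A $$ (i1, j0)"
  shows "2 \<le> rank A"
proof -
  define c0 where "c0 = col A j0"
  define c1 where "c1 = col A j1"
  have c0_index: "c0 $ i = A $$ (i, j0)" and c1_index: "c1 $ i = A $$ (i, j1)" if "i < n" for i
    using that A cols by (auto simp: c0_def c1_def)
  have "c0 \<noteq> c1"
    using minor c0_index[OF rows(1)] c0_index[OF rows(2)] c1_index[OF rows(1)] c1_index[OF rows(2)]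
    by auto
  have cols_carrier: "{c0, c1} \<subseteq> carrier_vec n"
    using A cols by (auto simp: c0_def c1_def)
  have "lin_indpt {c0, c1}"
  proof
    assume dep: "lin_dep {c0, c1}"
    obtain a v where zero: "lincomb a {c0, c1} = 0\<^sub>v n" and v: "v \<in> {c0, c1}" "a v \<noteq> 0"
      using finite_lin_dep[OF _ dep cols_carrier] by auto
    have row_eq: "a c0 * A $$ (i, j0) + a c1 * A $$ (i, j1) = 0" if "i < n" for i
    proof -
      have "lincomb a {c0, c1} $ i = 0" using zero that by simp
      then show ?thesis
        using lincomb_index[OF that cols_carrier, of a] \<open>c0 \<noteq> c1\<close> c0_index c1_index that by simp
    qed
    let ?m = "A $$ (i0, j0) * A $$ (i1, j1) - A $$ (i0, j1) * A $$ (i1, j0)"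
    \<comment> \<open>Cramer's rule for the 2-by-2 system given by rows i0 and i1.\<close>
    have "a c0 * ?m = A $$ (i1, j1) * (a c0 * A $$ (i0, j0) + a c1 * A $$ (i0, j1))
                    - A $$ (i0, j1) * (a c0 * A $$ (i1, j0) + a c1 * A $$ (i1, j1))"
      and "a c1 * ?m = A $$ (i0, j0) * (a c0 * A $$ (i1, j0) + a c1 * A $$ (i1, j1))
                    - A $$ (i1, j0) * (a c0 * A $$ (i0, j0) + a c1 * A $$ (i0, j1))"
      by (simp_all add: algebra_simps)
    then have "a c0 * ?m = 0" "a c1 * ?m = 0"
      using row_eq[OF rows(1)] row_eq[OF rows(2)] by simp_all
    then show False
      using minor v by auto
  qed
  moreover have "{c0, c1} \<subseteq> set (cols A)"
    using A cols by (auto simp: c0_def c1_def cols_def)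
  ultimately have "card {c0, c1} \<le> rank A"
    using rank_ge_card_indpt[OF A] by blast
  then show ?thesis
    using \<open>c0 \<noteq> c1\<close> by simp
qed

lemma KL_mat_carrier: "KL_mat H S m \<nu> \<in> carrier_mat H S"
  by (simp add: KL_mat_def)

lemma KL_mat_gap_affine:
  assumes "\<theta> < H" "\<theta>' < H" "s < S"
  shows "KL_mat H S m \<nu> $$ (\<theta>, s) - KL_mat H S m \<nu> $$ (\<theta>', s)
           = ((m \<theta>)\<^sup>2 - (m \<theta>')\<^sup>2) / 2 + (m \<theta>' - m \<theta>) * \<nu> s"
  using assms by (simp add: KL_mat_def power2_eq_square field_simps)

lemma B_mat_index:
  assumes D: "D \<in> carrier_mat H S" and "\<theta>s < H" "i < H" "j < S"
  shows "B_mat H \<theta>s D $$ (i, j) = D $$ (\<theta>s, j) - D $$ (i, j)"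
proof -
  have "B_mat H \<theta>s D $$ (i, j)
          = (\<Sum>k<H. ((if k = \<theta>s then 1 else 0) - (if i = k then 1 else 0)) * D $$ (k, j))"
    using assms by (simp add: B_mat_def scalar_prod_def atLeast0LessThan)
  also have "\<dots> = (\<Sum>k<H. if k = \<theta>s then D $$ (k, j) else 0) - (\<Sum>k<H. if k = i then D $$ (k, j) else 0)"
    unfolding sum_subtractf[symmetric] by (rule sum.cong) auto
  also have "\<dots> = D $$ (\<theta>s, j) - D $$ (i, j)"
    using assms by (simp add: sum.delta')
  finally show ?thesis .
qed

lemma C_mat_carrier:
  assumes "D \<in> carrier_mat H S"
  shows "C_mat H S \<theta>s D \<in> carrier_mat (H + 1) S"
  unfolding C_mat_def B_mat_def by (rule carrier_append_rows) (use assms in auto)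

lemma C_mat_index:
  assumes D: "D \<in> carrier_mat H S" and "\<theta>s < H" "i < H + 1" "j < S"
  shows "C_mat H S \<theta>s D $$ (i, j) = (if i < H then D $$ (\<theta>s, j) - D $$ (i, j) else 1)"
  using assms B_mat_index[OF D] by (auto simp: C_mat_def append_rows_def B_mat_def)

theorem theorem2:
  fixes S H :: nat and m \<nu> x :: "nat \<Rightarrow> real" and \<theta>s :: nat
  assumes "S \<ge> 2" and "H \<ge> S"
    and "inj_on m {..<H}"
    and "\<forall>s<S. \<nu> s \<in> m ` {..<H}"
    and "inj_on \<nu> {..<S}"
    and "\<forall>s<S. x s > 0" and "(\<Sum>s<S. x s) = 1"
    and "\<theta>s < H"
    and "\<forall>\<theta><H. \<theta> \<noteq> \<theta>s \<longrightarrow>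
           (\<Sum>s<S. (KL_mat H S m \<nu>) $$ (\<theta>s, s) * x s) < (\<Sum>s<S. (KL_mat H S m \<nu>) $$ (\<theta>, s) * x s)"
  shows "vec_space.rank (H + 1) (C_mat H S \<theta>s (KL_mat H S m \<nu>)) = 2"
proof -
  interpret vec_space "TYPE(real)" "H + 1" .
  let ?C = "C_mat H S \<theta>s (KL_mat H S m \<nu>)"
  have C: "?C \<in> carrier_mat (H + 1) S"
    by (rule C_mat_carrier[OF KL_mat_carrier])
  define f where "f r = (if r < H then ((m \<theta>s)\<^sup>2 - (m r)\<^sup>2) / 2 else 1)" for r
  define h where "h r = (if r < H then m r - m \<theta>s else 0)" for r
  have entries: "?C $$ (r, s) = f r * 1 + h r * \<nu> s" if "r < H + 1" "s < S" for r s
    using that \<open>\<theta>s < H\<close> by (simp add: C_mat_index[OF KL_mat_carrier] KL_mat_gap_affine f_def h_def)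
  have "rank ?C \<le> 2"
    by (rule rank_le_2_sum_product_entries[OF C entries])
  moreover have "2 \<le> rank ?C"
  proof -
    obtain t where t: "t < H" "t \<noteq> \<theta>s"
      using \<open>S \<ge> 2\<close> \<open>H \<ge> S\<close> by (metis One_nat_def less_le_trans not_less_eq numeral_2_eq_2 zero_less_Suc)
    have "m t \<noteq> m \<theta>s"
      using t \<open>\<theta>s < H\<close> \<open>inj_on m {..<H}\<close> by (auto dest: inj_onD)
    moreover have "\<nu> 0 \<noteq> \<nu> 1"
      using \<open>S \<ge> 2\<close> \<open>inj_on \<nu> {..<S}\<close> by (auto dest: inj_onD)
    ultimately show ?thesis
      using \<open>S \<ge> 2\<close> t by (intro rank_ge_2_of_nonzero_minor[OF C, of t H 0 1]) (auto simp: entries f_def h_def)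
  qed
  ultimately show ?thesis
    by simp
qed

end
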